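(* Let $\mathcal H$ be a separable infinite-dimensional Hilbert space, $\omega\in(0,1)$, and let $\mathfrak i$ be the principal Calkin space generated by the sequence $(\omega^{n-1})_{n\ge1}$. Then there exists $A\in\mathbf B(\mathcal H)$ such that $s(A)\in\mathfrak i$ and $\mathrm h(M_{A,A})\notin\mathfrak i$, where $M_{A,A}:\mathbf B(\mathcal H)\to\mathbf B(\mathcal H)$, $X\mapsto AXA$.
   Context: $c_0$: complex null sequences; $\alpha^\star$: non-increasing rearrangement of $(|\alpha_n|)$. A Calkin space is a linear subspace $\mathfrak i\subseteq c_0$ such that $\alpha\in\mathfrak i,\beta\in c_0,\beta^\star\le\alpha^\star$ imply $\beta\in\mathfrak i$; the principal Calkin space generated by $\alpha$ is the smallest Calkin space containing $\alpha$. $s(A)$ is the singular number sequence of a compact operator $A$. Hilbert numbers of a bounded operator $T:\mathcal X\to\mathcal Y$: $\mathrm h_n(T)=\sup s_n(ATB)$ over all Hilbert spaces $\mathcal H',\mathcal K'$ and contractions $A\in\mathbf B(\mathcal Y,\mathcal H')$, $B\in\mathbf B(\mathcal K',\mathcal X)$. *)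

theory Defs
  imports "HOL-Analysis.Analysis"
begin

text \<open>Sequences and the Hilbert space H = l2(N) of square-summable complex sequences
  (every separable infinite-dimensional complex Hilbert space is unitarily equivalent to it).\<close>

type_synonym vec = "nat \<Rightarrow> complex"
type_synonym op = "vec \<Rightarrow> vec"

definition l2 :: "vec set" where
  "l2 = {x. summable (\<lambda>n. (cmod (x n))^2)}"

definition l2norm :: "vec \<Rightarrow> real" where
  "l2norm x = sqrt (\<Sum>n. (cmod (x n))^2)"

definition bop :: "op set" where
  "bop = {T. (\<forall>x\<in>l2. T x \<in> l2) \<and> (\<forall>x. x \<notin> l2 \<longrightarrow> T x = (\<lambda>n. 0))
          \<and> (\<forall>a x y. x \<in> l2 \<longrightarrow> y \<in> l2 \<longrightarrow>
               T (\<lambda>n. a * x n + y n) = (\<lambda>n. a * T x n + T y n))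
          \<and> (\<exists>C. \<forall>x\<in>l2. l2norm (T x) \<le> C * l2norm x)}"

definition opnorm :: "op \<Rightarrow> real" where
  "opnorm T = Sup ((\<lambda>x. l2norm (T x)) ` {x\<in>l2. l2norm x \<le> 1})"

definition rank_le :: "op \<Rightarrow> nat \<Rightarrow> bool" where
  "rank_le F k = (\<exists>v :: nat \<Rightarrow> vec. (\<forall>i<k. v i \<in> l2) \<and>
       (\<forall>x\<in>l2. \<exists>c :: nat \<Rightarrow> complex. F x = (\<lambda>n. \<Sum>i<k. c i * v i n)))"

text \<open>Singular numbers (0-indexed: sing_num k A is s_{k+1}(A)), as approximation numbers.\<close>
definition sing_num :: "nat \<Rightarrow> op \<Rightarrow> real" where
  "sing_num k A = Inf ((\<lambda>F. opnorm (\<lambda>x n. A x n - F x n)) ` {F\<in>bop. rank_le F k})"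

text \<open>Contractions B(H) -> K' and K' -> B(H), with K' = l2, and B(H) carrying the operator norm.\<close>
definition contr_out :: "(op \<Rightarrow> vec) \<Rightarrow> bool" where
  "contr_out P = ((\<forall>X\<in>bop. P X \<in> l2)
     \<and> (\<forall>a X Y. X \<in> bop \<longrightarrow> Y \<in> bop \<longrightarrow>
          P (\<lambda>v n. a * X v n + Y v n) = (\<lambda>n. a * P X n + P Y n))
     \<and> (\<forall>X\<in>bop. l2norm (P X) \<le> opnorm X))"

definition contr_in :: "(vec \<Rightarrow> op) \<Rightarrow> bool" where
  "contr_in Q = ((\<forall>x\<in>l2. Q x \<in> bop)
     \<and> (\<forall>a x y. x \<in> l2 \<longrightarrow> y \<in> l2 \<longrightarrow>
          Q (\<lambda>n. a * x n + y n) = (\<lambda>v n. a * Q x v n + Q y v n))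
     \<and> (\<forall>x\<in>l2. opnorm (Q x) \<le> l2norm x))"

text \<open>Hilbert numbers (0-indexed) of a map Phi : B(H) -> B(H).\<close>
definition hilbert_num :: "nat \<Rightarrow> (op \<Rightarrow> op) \<Rightarrow> real" where
  "hilbert_num k Phi = Sup {sing_num k (\<lambda>x. P (Phi (Q x))) | P Q. contr_out P \<and> contr_in Q}"

definition c0 :: "vec set" where
  "c0 = {a. a \<longlonglongrightarrow> 0}"

definition rearr :: "vec \<Rightarrow> nat \<Rightarrow> real" where
  "rearr a n = Inf ((\<lambda>J. Sup ((\<lambda>k. cmod (a k)) ` (- J))) ` {J. finite J \<and> card J \<le> n})"

definition calkin_space :: "vec set \<Rightarrow> bool" where
  "calkin_space I = (I \<subseteq> c0 \<and> (\<lambda>n. 0) \<in> I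
     \<and> (\<forall>a\<in>I. \<forall>b\<in>I. \<forall>c. (\<lambda>n. c * a n + b n) \<in> I)
     \<and> (\<forall>a\<in>I. \<forall>b\<in>c0. (\<forall>n. rearr b n \<le> rearr a n) \<longrightarrow> b \<in> I))"

definition principal_calkin :: "vec \<Rightarrow> vec set" where
  "principal_calkin a = {b. \<forall>I. calkin_space I \<and> a \<in> I \<longrightarrow> b \<in> I}"

definition mult_op :: "op \<Rightarrow> op \<Rightarrow> op \<Rightarrow> op" where
  "mult_op A B X = A \<circ> X \<circ> B"

end

theory Submission
  imports Defs "HOL-Real_Asymp.Real_Asymp"
begin

text \<open>Take A = diag(\<omega>^n), whose singular numbers are at most \<omega>^k. Composing X \<mapsto> A X A with
  contractions that identify l2 with N\<times>N matrices yields the diagonal operator with the N^2 weights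
  \<omega>^(i+j)/N^3 (i, j < N), so h_k(M_{A,A}) \<ge> \<omega>^(2(N-1))/N^3 for all k < N^2. On the other hand
  the sequences b with b* (m n) = O(\<omega>^n) for some m form a Calkin space containing (\<omega>^n), hence
  the principal one. If h(M_{A,A}) belonged to it, sampling at m n = 3 m s < (s+1)^2 would give
  \<omega>^(2s)/(s+1)^3 \<le> C \<omega>^(3s), i.e. C (s+1)^3 \<omega>^s \<ge> 1 for all large s, which is absurd.\<close>

lemma l2norm_nonneg: "x \<in> l2 \<Longrightarrow> 0 \<le> l2norm x"
  unfolding l2norm_def l2_def by (simp add: suminf_nonneg)

lemma l2norm_squared: "x \<in> l2 \<Longrightarrow> (l2norm x)^2 = (\<Sum>n. (cmod (x n))^2)"
  unfolding l2norm_def l2_def by (simp add: suminf_nonneg)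

lemma l2_finite_support:
  assumes "\<And>n. n \<ge> N \<Longrightarrow> x n = 0" shows "x \<in> l2"
  unfolding l2_def by (rule CollectI, rule summable_finite[of "{..<N}"]) (use assms in auto)

lemma l2norm_squared_finite_support:
  assumes "\<And>n. n \<ge> N \<Longrightarrow> x n = 0"
  shows "(l2norm x)^2 = (\<Sum>n<N. (cmod (x n))^2)"
proof -
  have "(\<Sum>n. (cmod (x n))^2) = (\<Sum>n<N. (cmod (x n))^2)"
    by (rule suminf_finite) (use assms in auto)
  then show ?thesis using l2norm_squared[OF l2_finite_support[OF assms]] by simp
qed

lemma l2_zero: "(\<lambda>n. 0) \<in> l2" and l2norm_zero: "l2norm (\<lambda>n. 0) = 0"
  unfolding l2_def l2norm_def by auto

lemma norm_le_l2norm: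
  assumes "x \<in> l2" shows "cmod (x j) \<le> l2norm x"
proof -
  have "(\<Sum>n\<in>{j}. (cmod (x n))^2) \<le> (\<Sum>n. (cmod (x n))^2)"
    using assms unfolding l2_def by (intro sum_le_suminf) auto
  then have "sqrt ((cmod (x j))^2) \<le> l2norm x"
    unfolding l2norm_def by (intro real_sqrt_le_mono) simp
  then show ?thesis by simp
qed

lemma
  assumes "x \<in> l2" "0 \<le> c" "\<And>n. cmod (y n) \<le> c * cmod (x n)"
  shows l2_dominated: "y \<in> l2" and l2norm_dominated: "l2norm y \<le> c * l2norm x"
proof -
  have sx: "summable (\<lambda>n. (cmod (x n))^2)" using assms unfolding l2_def by simp
  have pw: "(cmod (y n))^2 \<le> c^2 * (cmod (x n))^2" for n
    using power_mono[OF assms(3)[of n]] by (simp add: power_mult_distrib)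
  have s2: "summable (\<lambda>n. c^2 * (cmod (x n))^2)" using sx by (rule summable_mult)
  have sy: "summable (\<lambda>n. (cmod (y n))^2)"
    by (rule summable_comparison_test[OF _ s2]) (use pw in auto)
  then show y: "y \<in> l2" unfolding l2_def by simp
  have "(l2norm y)^2 \<le> (\<Sum>n. c^2 * (cmod (x n))^2)"
    unfolding l2norm_squared[OF y] by (rule suminf_le[OF pw sy s2])
  also have "\<dots> = (c * l2norm x)^2"
    using sx l2norm_squared[OF assms(1)] by (simp add: suminf_mult power_mult_distrib)
  finally show "l2norm y \<le> c * l2norm x"
    by (rule power2_le_imp_le) (use assms(2) l2norm_nonneg[OF assms(1)] in simp)
qed

lemma
  assumes "u \<in> l2" "v \<in> l2"
  shows l2_diff: "(\<lambda>n. u n - v n) \<in> l2"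
    and l2norm_diff_le: "l2norm (\<lambda>n. u n - v n) \<le> 2 * (l2norm u + l2norm v)"
proof -
  have su: "summable (\<lambda>n. (cmod (u n))^2)" and sv: "summable (\<lambda>n. (cmod (v n))^2)"
    using assms unfolding l2_def by auto
  have pw: "(cmod (u n - v n))^2 \<le> 2 * (cmod (u n))^2 + 2 * (cmod (v n))^2" for n
  proof -
    have "(cmod (u n - v n))^2 \<le> (cmod (u n) + cmod (v n))^2"
      by (simp add: power_mono norm_triangle_ineq4)
    also have "\<dots> \<le> 2 * (cmod (u n))^2 + 2 * (cmod (v n))^2"
      using zero_le_power2[of "cmod (u n) - cmod (v n)"] by (simp add: power2_eq_square algebra_simps)
    finally show ?thesis .
  qed
  have s2: "summable (\<lambda>n. 2 * (cmod (u n))^2 + 2 * (cmod (v n))^2)"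
    using su sv by (intro summable_add summable_mult)
  have sd: "summable (\<lambda>n. (cmod (u n - v n))^2)"
    by (rule summable_comparison_test[OF _ s2]) (use pw in auto)
  then show d: "(\<lambda>n. u n - v n) \<in> l2" unfolding l2_def by simp
  have "(l2norm (\<lambda>n. u n - v n))^2 \<le> (\<Sum>n. 2 * (cmod (u n))^2 + 2 * (cmod (v n))^2)"
    unfolding l2norm_squared[OF d] by (rule suminf_le[OF pw sd s2])
  also have "\<dots> = 2 * (l2norm u)^2 + 2 * (l2norm v)^2"
    using su sv l2norm_squared[OF assms(1)] l2norm_squared[OF assms(2)]
    by (subst suminf_add[symmetric]) (auto intro: summable_mult simp: suminf_mult)
  also have "\<dots> \<le> (2 * (l2norm u + l2norm v))^2"
    using l2norm_nonneg[OF assms(1)] l2norm_nonneg[OF assms(2)]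
    by (simp add: power2_eq_square algebra_simps)
  finally show "l2norm (\<lambda>n. u n - v n) \<le> 2 * (l2norm u + l2norm v)"
    by (rule power2_le_imp_le) (use l2norm_nonneg[OF assms(1)] l2norm_nonneg[OF assms(2)] in auto)
qed

lemma l2_lincomb: "x \<in> l2 \<Longrightarrow> y \<in> l2 \<Longrightarrow> (\<lambda>n. a * x n + y n) \<in> l2"
  using l2_diff[OF _ l2_dominated[of x "cmod a" "\<lambda>n. - a * x n"], of y]
  by (simp add: norm_mult add.commute)

definition evec :: "nat \<Rightarrow> vec" where
  "evec j = (\<lambda>n. if n = j then 1 else 0)"

lemma sum_mult_evec: "(\<Sum>i<k. g i * evec i n) = (if n < k then g n else 0)"
  by (simp add: evec_def if_distrib[of "(*) _"] sum.delta' cong: if_cong)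

lemma evec_l2: "evec j \<in> l2" and l2norm_evec: "l2norm (evec j) = 1"
proof -
  show "evec j \<in> l2" by (rule l2_finite_support[of "Suc j"]) (auto simp: evec_def)
  have "(l2norm (evec j))^2 = 1"
    by (subst l2norm_squared_finite_support[of "Suc j"]) (auto simp: evec_def)
  then show "l2norm (evec j) = 1"
    using l2norm_nonneg[OF \<open>evec j \<in> l2\<close>] by (simp add: power2_eq_1_iff)
qed

subsection \<open>Bounded operators and singular numbers\<close>

definition bounded_by :: "op \<Rightarrow> real \<Rightarrow> bool" where
  "bounded_by T B = (\<forall>x\<in>l2. l2norm x \<le> 1 \<longrightarrow> T x \<in> l2 \<and> l2norm (T x) \<le> B)"

lemma l2norm_le_opnorm:
  assumes "bounded_by T B" "x \<in> l2" "l2norm x \<le> 1"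
  shows "l2norm (T x) \<le> opnorm T"
  unfolding opnorm_def
  by (rule cSup_upper) (use assms in \<open>auto simp: bounded_by_def bdd_above_def\<close>)

lemma opnorm_le:
  assumes "\<And>x. x \<in> l2 \<Longrightarrow> l2norm x \<le> 1 \<Longrightarrow> l2norm (T x) \<le> B"
  shows "opnorm T \<le> B"
  unfolding opnorm_def by (rule cSup_least) (use assms l2_zero l2norm_zero in auto)

lemma opnorm_nonneg:
  assumes "bounded_by T B" shows "0 \<le> opnorm T"
  using l2norm_le_opnorm[OF assms l2_zero] l2norm_nonneg assms l2_zero
  by (force simp: bounded_by_def l2norm_zero)

lemma bounded_by_diff:
  assumes "bounded_by T B1" "bounded_by F B2"
  shows "bounded_by (\<lambda>x n. T x n - F x n) (2 * (B1 + B2))"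
  unfolding bounded_by_def
proof (intro ballI impI conjI)
  fix x assume "x \<in> l2" "l2norm x \<le> 1"
  then have "T x \<in> l2" "l2norm (T x) \<le> B1" "F x \<in> l2" "l2norm (F x) \<le> B2"
    using assms unfolding bounded_by_def by auto
  then show "(\<lambda>n. T x n - F x n) \<in> l2" "l2norm (\<lambda>n. T x n - F x n) \<le> 2 * (B1 + B2)"
    using l2_diff l2norm_diff_le[of "T x" "F x"] by auto
qed

lemma bop_l2: "X \<in> bop \<Longrightarrow> x \<in> l2 \<Longrightarrow> X x \<in> l2"
  and bop_outside: "X \<in> bop \<Longrightarrow> x \<notin> l2 \<Longrightarrow> X x = (\<lambda>n. 0)"
  and bop_linear: "X \<in> bop \<Longrightarrow> x \<in> l2 \<Longrightarrow> y \<in> l2 \<Longrightarrow>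
     X (\<lambda>n. a * x n + y n) = (\<lambda>n. a * X x n + X y n)"
  unfolding bop_def by blast+

lemma bop_bound:
  assumes "X \<in> bop" shows "\<exists>C\<ge>0. \<forall>x\<in>l2. l2norm (X x) \<le> C * l2norm x"
proof -
  obtain C where C: "\<forall>x\<in>l2. l2norm (X x) \<le> C * l2norm x" using assms unfolding bop_def by auto
  have "C * l2norm x \<le> \<bar>C\<bar> * l2norm x" if "x \<in> l2" for x
    using l2norm_nonneg[OF that] by (simp add: mult_right_mono)
  then show ?thesis using C by (intro exI[of _ "\<bar>C\<bar>"]) force
qed

lemma bop_bounded_by:
  assumes "X \<in> bop" shows "\<exists>B. bounded_by X B"
proof -
  obtain C where "C \<ge> 0" "\<forall>x\<in>l2. l2norm (X x) \<le> C * l2norm x" using bop_bound[OF assms] by auto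
  then have "bounded_by X C"
    using assms by (auto simp: bounded_by_def bop_l2 intro: order_trans mult_left_le)
  then show ?thesis by blast
qed

lemma bop_apply_zero:
  assumes "X \<in> bop" shows "X (\<lambda>n. 0) = (\<lambda>n. 0)"
  using bop_linear[OF assms l2_zero l2_zero, of 1] by (simp add: fun_eq_iff)

lemma bop_sum:
  assumes "F \<in> bop" "\<And>t. u t \<in> l2"
  shows "(\<lambda>n. \<Sum>t<(m::nat). a t * u t n) \<in> l2 \<and>
    F (\<lambda>n. \<Sum>t<m. a t * u t n) = (\<lambda>n. \<Sum>t<m. a t * F (u t) n)"
proof (induction m)
  case 0
  then show ?case using l2_zero bop_apply_zero[OF assms(1)] by simp
next
  case (Suc m)
  have "(\<lambda>n. \<Sum>t<Suc m. a t * u t n) = (\<lambda>n. a m * u m n + (\<Sum>t<m. a t * u t n))"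
    "(\<lambda>n. \<Sum>t<Suc m. a t * F (u t) n) = (\<lambda>n. a m * F (u m) n + (\<Sum>t<m. a t * F (u t) n))"
    by (simp_all add: add.commute)
  with Suc show ?case
    using l2_lincomb[OF assms(2)[of m]] bop_linear[OF assms(1) assms(2)[of m]] by simp
qed

lemma bop_comp:
  assumes X: "X \<in> bop" and Y: "Y \<in> bop" shows "X \<circ> Y \<in> bop"
  unfolding bop_def
proof (intro CollectI conjI ballI allI impI)
  obtain C1 where C1: "C1 \<ge> 0" "\<forall>x\<in>l2. l2norm (X x) \<le> C1 * l2norm x" using bop_bound[OF X] by auto
  obtain C2 where C2: "\<forall>x\<in>l2. l2norm (Y x) \<le> C2 * l2norm x" using bop_bound[OF Y] by auto
  have "l2norm (X (Y x)) \<le> (C1 * C2) * l2norm x" if "x \<in> l2" for x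
  proof -
    have "l2norm (X (Y x)) \<le> C1 * l2norm (Y x)" using C1 bop_l2[OF Y that] by auto
    also have "\<dots> \<le> C1 * (C2 * l2norm x)" using C1(1) C2 that by (intro mult_left_mono) auto
    finally show ?thesis by (simp add: mult.assoc)
  qed
  then show "\<exists>C. \<forall>x\<in>l2. l2norm ((X \<circ> Y) x) \<le> C * l2norm x" by auto
qed (use X Y in \<open>auto simp: bop_l2 bop_outside bop_apply_zero bop_linear\<close>)

lemma bop_zero: "(\<lambda>x n. 0) \<in> bop"
  unfolding bop_def using l2_zero l2norm_zero by (auto intro!: exI[of _ 0])

lemma rank_le_zero: "rank_le (\<lambda>x n. 0) k"
  unfolding rank_le_def by (rule exI[of _ "\<lambda>i n. 0"]) (auto simp: l2_zero)

lemma sing_num_greatest: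
  assumes "\<And>F. F \<in> bop \<Longrightarrow> rank_le F k \<Longrightarrow> c \<le> opnorm (\<lambda>x n. T x n - F x n)"
  shows "c \<le> sing_num k T"
  unfolding sing_num_def
  by (rule cInf_greatest) (use assms bop_zero rank_le_zero in blast)+

lemma sing_num_nonneg:
  assumes "bounded_by T B" shows "0 \<le> sing_num k T"
proof (rule sing_num_greatest)
  fix F assume "F \<in> bop"
  then obtain B' where "bounded_by F B'" using bop_bounded_by by blast
  then show "0 \<le> opnorm (\<lambda>x n. T x n - F x n)"
    by (rule opnorm_nonneg[OF bounded_by_diff[OF assms]])
qed

lemma sing_num_le_opnorm_diff:
  assumes "bounded_by T B" "F \<in> bop" "rank_le F k"
  shows "sing_num k T \<le> opnorm (\<lambda>x n. T x n - F x n)"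
  unfolding sing_num_def
proof (rule cInf_lower)
  show "bdd_below ((\<lambda>F. opnorm (\<lambda>x n. T x n - F x n)) ` {F \<in> bop. rank_le F k})"
    using opnorm_nonneg[OF bounded_by_diff[OF assms(1)]] bop_bounded_by
    by (intro bdd_belowI[where m=0]) blast
qed (use assms in auto)

lemma sing_num_le_opnorm: "bounded_by T B \<Longrightarrow> sing_num k T \<le> opnorm T"
  using sing_num_le_opnorm_diff[OF _ bop_zero rank_le_zero] by simp

subsection \<open>Non-increasing rearrangement and Calkin spaces\<close>

definition tail_sup :: "vec \<Rightarrow> nat set \<Rightarrow> real" where
  "tail_sup a J = Sup ((\<lambda>k. cmod (a k)) ` (- J))"

lemma rearr_eq_Inf_tail_sup: "rearr a n = Inf (tail_sup a ` {J. finite J \<and> card J \<le> n})"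
  unfolding rearr_def tail_sup_def by simp

lemma le_tail_sup:
  assumes "Bseq a" "k \<notin> J" shows "cmod (a k) \<le> tail_sup a J"
  unfolding tail_sup_def
proof (rule cSup_upper)
  obtain K where "\<And>k. cmod (a k) \<le> K" using assms(1) by (auto simp: Bseq_def)
  then show "bdd_above ((\<lambda>k. cmod (a k)) ` (- J))" by (intro bdd_aboveI[where M=K]) auto
qed (use assms(2) in simp)

lemma tail_sup_le:
  assumes "finite J" "\<And>k. k \<notin> J \<Longrightarrow> cmod (a k) \<le> c" shows "tail_sup a J \<le> c"
  unfolding tail_sup_def
proof (rule cSup_least)
  obtain k :: nat where "k \<notin> J" using assms(1) ex_new_if_finite infinite_UNIV_nat by blast
  then show "(\<lambda>k. cmod (a k)) ` (- J) \<noteq> {}" by blast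
qed (use assms(2) in blast)

lemma tail_sup_nonneg:
  assumes "Bseq a" "finite J" shows "0 \<le> tail_sup a J"
proof -
  obtain k :: nat where "k \<notin> J" using assms(2) ex_new_if_finite infinite_UNIV_nat by blast
  then show ?thesis using order_trans[OF norm_ge_zero le_tail_sup[OF assms(1)]] by blast
qed

lemma le_rearr:
  assumes "\<And>J. finite J \<Longrightarrow> card J \<le> n \<Longrightarrow> c \<le> tail_sup a J" shows "c \<le> rearr a n"
  unfolding rearr_eq_Inf_tail_sup
proof (rule cInf_greatest)
  have "{} \<in> {J. finite J \<and> card J \<le> n}" by simp
  then show "tail_sup a ` {J. finite J \<and> card J \<le> n} \<noteq> {}" by blast
qed (use assms in blast)

lemma rearr_le_tail_sup:
  assumes "Bseq a" "finite J" "card J \<le> n" shows "rearr a n \<le> tail_sup a J"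
  unfolding rearr_eq_Inf_tail_sup
proof (rule cInf_lower)
  show "bdd_below (tail_sup a ` {J. finite J \<and> card J \<le> n})"
    using tail_sup_nonneg[OF assms(1)] by (intro bdd_belowI[where m=0]) blast
qed (use assms(2,3) in simp)

text \<open>Among the first K terms at most j < K can be discarded, so one of them survives.\<close>
lemma le_rearr_of_le_initial:
  assumes "Bseq a" "j < K" "\<And>k. k < K \<Longrightarrow> c \<le> cmod (a k)"
  shows "c \<le> rearr a j"
proof (rule le_rearr)
  fix J :: "nat set" assume J: "finite J" "card J \<le> j"
  have "\<not> {..<K} \<subseteq> J" using card_mono[OF J(1), of "{..<K}"] J(2) assms(2) by auto
  then obtain k where "k < K" "k \<notin> J" by auto
  then show "c \<le> tail_sup a J" using order_trans[OF assms(3) le_tail_sup[OF assms(1)]] by blast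
qed

lemma rearr_lincomb_le:
  assumes "Bseq a" "Bseq b"
  shows "rearr (\<lambda>n. c * a n + b n) (p + q) \<le> cmod c * rearr a p + rearr b q"
proof -
  have tri: "cmod (c * a k + b k) \<le> cmod c * cmod (a k) + cmod (b k)" for k
    by (metis norm_mult norm_triangle_ineq)
  obtain Ka Kb where "\<And>n. cmod (a n) \<le> Ka" "\<And>n. cmod (b n) \<le> Kb"
    using assms by (auto simp: Bseq_def)
  then have bd: "Bseq (\<lambda>n. c * a n + b n)"
    by (intro BseqI'[of _ "cmod c * Ka + Kb"] order_trans[OF tri] add_mono mult_left_mono) auto
  define r where "r = rearr (\<lambda>n. c * a n + b n) (p + q)"
  have key: "r \<le> cmod c * tail_sup a J1 + tail_sup b J2"
    if J: "finite J1" "card J1 \<le> p" "finite J2" "card J2 \<le> q" for J1 J2 :: "nat set"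
  proof -
    have "r \<le> tail_sup (\<lambda>n. c * a n + b n) (J1 \<union> J2)"
      unfolding r_def using J card_Un_le[of J1 J2] by (intro rearr_le_tail_sup[OF bd]) auto
    also have "\<dots> \<le> cmod c * tail_sup a J1 + tail_sup b J2"
    proof (rule tail_sup_le)
      fix k assume k: "k \<notin> J1 \<union> J2"
      have "cmod (c * a k + b k) \<le> cmod c * cmod (a k) + cmod (b k)" by (rule tri)
      also have "\<dots> \<le> cmod c * tail_sup a J1 + tail_sup b J2"
        using k le_tail_sup[OF assms(1), of k J1] le_tail_sup[OF assms(2), of k J2]
        by (intro add_mono mult_left_mono) auto
      finally show "cmod (c * a k + b k) \<le> cmod c * tail_sup a J1 + tail_sup b J2" .
    qed (use J in auto)
    finally show ?thesis .
  qed
  have "r - cmod c * rearr a p \<le> tail_sup b J2" if J2: "finite J2" "card J2 \<le> q" for J2 :: "nat set"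
  proof (cases "c = 0")
    case True
    then show ?thesis using key[of "{}" J2] J2 by simp
  next
    case False
    have "(r - tail_sup b J2) / cmod c \<le> rearr a p"
    proof (rule le_rearr)
      fix J1 :: "nat set" assume "finite J1" "card J1 \<le> p"
      then have "r - tail_sup b J2 \<le> cmod c * tail_sup a J1" using key[of J1 J2] J2 by linarith
      then show "(r - tail_sup b J2) / cmod c \<le> tail_sup a J1"
        using False by (simp add: divide_le_eq mult.commute)
    qed
    then show ?thesis using False by (simp add: divide_le_eq mult.commute)
  qed
  then have "r - cmod c * rearr a p \<le> rearr b q" by (intro le_rearr)
  then show ?thesis unfolding r_def by linarith
qed

lemma rearr_mono:
  assumes "Bseq a" "\<And>k. cmod (b k) \<le> cmod (a k)"
  shows "rearr b n \<le> rearr a n"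
proof (rule le_rearr)
  fix J :: "nat set" assume J: "finite J" "card J \<le> n"
  have "Bseq b" using assms by (metis Bseq_def order_trans)
  then have "rearr b n \<le> tail_sup b J" by (rule rearr_le_tail_sup[OF _ J])
  also have "\<dots> \<le> tail_sup a J"
    using J(1) assms(2) le_tail_sup[OF assms(1)] by (intro tail_sup_le) (auto intro: order_trans)
  finally show "rearr b n \<le> tail_sup a J" .
qed

lemma c0_Bseq: "a \<in> c0 \<Longrightarrow> Bseq a"
  unfolding c0_def by (blast intro: convergent_imp_Bseq convergentI)

lemma principal_calkin_subset:
  "calkin_space I \<Longrightarrow> a \<in> I \<Longrightarrow> principal_calkin a \<subseteq> I"
  unfolding principal_calkin_def by blast

lemma principal_calkin_dominated:
  assumes "a \<in> c0" "b \<in> c0" "\<And>k. cmod (b k) \<le> cmod (a k)"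
  shows "b \<in> principal_calkin a"
proof (unfold principal_calkin_def, intro CollectI allI impI)
  fix I assume "calkin_space I \<and> a \<in> I"
  moreover have "\<forall>n. rearr b n \<le> rearr a n" using rearr_mono[OF c0_Bseq[OF assms(1)] assms(3)] by blast
  ultimately show "b \<in> I" using assms(2) unfolding calkin_space_def by blast
qed

text \<open>Sampling the rearrangement at the multiples m n, rather than at n, is what makes this class
  closed under sums.\<close>
definition geom_decay_class :: "real \<Rightarrow> vec set" where
  "geom_decay_class \<omega> = {b \<in> c0. \<exists>C m. \<forall>n. rearr b (m * n) \<le> C * \<omega> ^ n}"

lemma calkin_space_geom_decay_class: "calkin_space (geom_decay_class \<omega>)"
  unfolding calkin_space_def
proof (intro conjI ballI allI impI)
  show "geom_decay_class \<omega> \<subseteq> c0" unfolding geom_decay_class_def by auto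
  have "rearr (\<lambda>n. 0) 0 \<le> 0"
    using rearr_le_tail_sup[of "\<lambda>n. 0" "{}" 0] tail_sup_le[of "{}" "\<lambda>n. 0" 0] by simp
  then show "(\<lambda>n. 0) \<in> geom_decay_class \<omega>"
    unfolding geom_decay_class_def c0_def by (auto intro!: exI[of _ 0])
next
  fix a b c assume "a \<in> geom_decay_class \<omega>" "b \<in> geom_decay_class \<omega>"
  then obtain C1 m1 C2 m2 where a: "a \<in> c0" "\<And>n. rearr a (m1 * n) \<le> C1 * \<omega> ^ n"
    and b: "b \<in> c0" "\<And>n. rearr b (m2 * n) \<le> C2 * \<omega> ^ n"
    unfolding geom_decay_class_def by blast
  have "(\<lambda>n. c * a n + b n) \<longlonglongrightarrow> c * 0 + 0"
    using a(1) b(1) unfolding c0_def by (intro tendsto_intros) auto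
  then have "(\<lambda>n. c * a n + b n) \<in> c0" unfolding c0_def by simp
  moreover have "rearr (\<lambda>n. c * a n + b n) ((m1 + m2) * n) \<le> (cmod c * C1 + C2) * \<omega> ^ n" for n
  proof -
    have "rearr (\<lambda>n. c * a n + b n) (m1 * n + m2 * n) \<le> cmod c * rearr a (m1 * n) + rearr b (m2 * n)"
      by (rule rearr_lincomb_le[OF c0_Bseq[OF a(1)] c0_Bseq[OF b(1)]])
    also have "\<dots> \<le> cmod c * (C1 * \<omega> ^ n) + C2 * \<omega> ^ n"
      using a(2) b(2) by (intro add_mono mult_left_mono) auto
    finally show ?thesis by (simp add: algebra_simps)
  qed
  ultimately show "(\<lambda>n. c * a n + b n) \<in> geom_decay_class \<omega>"
    unfolding geom_decay_class_def by blast
next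
  fix a b assume "a \<in> geom_decay_class \<omega>" "b \<in> c0" "\<forall>n. rearr b n \<le> rearr a n"
  then show "b \<in> geom_decay_class \<omega>"
    unfolding geom_decay_class_def by (blast intro: order_trans)
qed

definition geom_seq :: "real \<Rightarrow> vec" where
  "geom_seq \<omega> = (\<lambda>k. complex_of_real (\<omega> ^ k))"

lemma geom_seq_c0: "\<bar>\<omega>\<bar> < 1 \<Longrightarrow> geom_seq \<omega> \<in> c0"
  unfolding c0_def geom_seq_def
  using tendsto_of_real[OF LIMSEQ_power_zero[of \<omega>]] by simp

lemma geom_seq_in_geom_decay_class:
  assumes "0 \<le> \<omega>" "\<omega> < 1" shows "geom_seq \<omega> \<in> geom_decay_class \<omega>"
proof -
  have "rearr (geom_seq \<omega>) (1 * n) \<le> 1 * \<omega> ^ n" for n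
  proof -
    have "rearr (geom_seq \<omega>) n \<le> tail_sup (geom_seq \<omega>) {..<n}"
      using assms by (intro rearr_le_tail_sup c0_Bseq geom_seq_c0) auto
    also have "\<dots> \<le> \<omega> ^ n"
      using assms by (intro tail_sup_le) (auto simp: geom_seq_def norm_power power_decreasing)
    finally show ?thesis by simp
  qed
  then show ?thesis
    unfolding geom_decay_class_def using assms geom_seq_c0[of \<omega>]
    by (intro CollectI conjI exI[of _ 1]) auto
qed

definition diag_mult :: "vec \<Rightarrow> op" where
  "diag_mult w x = (\<lambda>n. w n * x n)"

definition diag_op :: "vec \<Rightarrow> op" where
  "diag_op w x = (if x \<in> l2 then diag_mult w x else (\<lambda>n. 0))"

lemma
  assumes "\<And>n. cmod (w n) \<le> c" "x \<in> l2"
  shows l2_diag_mult: "diag_mult w x \<in> l2"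
    and l2norm_diag_mult_le: "l2norm (diag_mult w x) \<le> c * l2norm x"
proof -
  have "0 \<le> c" using order_trans[OF norm_ge_zero assms(1)] .
  moreover have "cmod (diag_mult w x n) \<le> c * cmod (x n)" for n
    unfolding diag_mult_def norm_mult by (rule mult_right_mono[OF assms(1)]) simp
  ultimately show "diag_mult w x \<in> l2" "l2norm (diag_mult w x) \<le> c * l2norm x"
    using l2_dominated[of x c "diag_mult w x"] l2norm_dominated[of x c "diag_mult w x"] assms(2)
    by blast+
qed

lemma bounded_by_diag_mult:
  assumes "\<And>n. cmod (w n) \<le> c" shows "bounded_by (diag_mult w) c"
  unfolding bounded_by_def
proof (intro ballI impI conjI)
  fix x assume x: "x \<in> l2" "l2norm x \<le> 1"
  have "0 \<le> c" using order_trans[OF norm_ge_zero assms] .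
  then have "c * l2norm x \<le> c" using x(2) by (simp add: mult_left_le)
  then show "l2norm (diag_mult w x) \<le> c"
    using l2norm_diag_mult_le[of w c, OF assms x(1)] by linarith
qed (use l2_diag_mult[of w c, OF assms] in blast)

lemma bounded_by_diag_op:
  assumes "\<And>n. cmod (w n) \<le> c" shows "bounded_by (diag_op w) c"
  using bounded_by_diag_mult[of w c, OF assms] by (simp add: bounded_by_def diag_op_def)

lemma diag_op_bop:
  assumes "\<And>n. cmod (w n) \<le> c" shows "diag_op w \<in> bop"
  unfolding bop_def
proof (intro CollectI conjI ballI allI impI)
  fix x assume "x \<in> l2"
  then show "diag_op w x \<in> l2" using l2_diag_mult[of w c, OF assms] by (simp add: diag_op_def)
next
  fix a x y assume "x \<in> l2" "y \<in> l2"
  then show "diag_op w (\<lambda>n. a * x n + y n) = (\<lambda>n. a * diag_op w x n + diag_op w y n)"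
    using l2_lincomb[of x y a] by (simp add: diag_op_def diag_mult_def fun_eq_iff algebra_simps)
next
  show "\<exists>C. \<forall>x\<in>l2. l2norm (diag_op w x) \<le> C * l2norm x"
    using l2norm_diag_mult_le[of w c, OF assms] by (auto simp: diag_op_def)
qed (simp add: diag_op_def)

lemma rank_le_diag_op_truncated: "rank_le (diag_op (\<lambda>n. if n < k then w n else 0)) k"
  unfolding rank_le_def
proof (intro exI[of _ evec] conjI allI impI ballI)
  fix x :: vec assume "x \<in> l2"
  then show "\<exists>c. diag_op (\<lambda>n. if n < k then w n else 0) x = (\<lambda>n. \<Sum>i<k. c i * evec i n)"
    by (intro exI[of _ "\<lambda>i. w i * x i"]) (auto simp: diag_op_def diag_mult_def sum_mult_evec)
qed (rule evec_l2)

lemma sing_num_diag_op_le: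
  assumes "\<And>n. cmod (w n) \<le> 1" "\<And>n. n \<ge> k \<Longrightarrow> cmod (w n) \<le> c"
  shows "sing_num k (diag_op w) \<le> c"
proof -
  define F where "F = diag_op (\<lambda>n. if n < k then w n else 0)"
  have "F \<in> bop" unfolding F_def using assms(1) by (intro diag_op_bop[where c=1]) simp
  then have "sing_num k (diag_op w) \<le> opnorm (\<lambda>x n. diag_op w x n - F x n)"
    using sing_num_le_opnorm_diff[OF bounded_by_diag_op[of w 1, OF assms(1)]]
      rank_le_diag_op_truncated unfolding F_def by blast
  also have "\<dots> \<le> c"
  proof (rule opnorm_le)
    fix x assume x: "x \<in> l2" "l2norm x \<le> 1"
    have "0 \<le> c" using order_trans[OF norm_ge_zero assms(2)[of k]] by simp
    then have tail: "cmod (if n < k then 0 else w n) \<le> c" for n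
      using assms(2)[of n] by auto
    have "(\<lambda>n. diag_op w x n - F x n) = diag_mult (\<lambda>n. if n < k then 0 else w n) x"
      using x by (simp add: F_def diag_op_def diag_mult_def fun_eq_iff)
    then have "l2norm (\<lambda>n. diag_op w x n - F x n) = l2norm (diag_mult (\<lambda>n. if n < k then 0 else w n) x)"
      by simp
    also have "\<dots> \<le> c * l2norm x"
      by (rule l2norm_diag_mult_le[of "\<lambda>n. if n < k then 0 else w n", OF tail x(1)])
    also have "\<dots> \<le> c" using \<open>0 \<le> c\<close> x(2) by (simp add: mult_left_le)
    finally show "l2norm (\<lambda>n. diag_op w x n - F x n) \<le> c" .
  qed
  finally show ?thesis .
qed

subsection \<open>A lower bound for singular numbers of diagonal operators\<close>

lemma homogeneous_system_nontrivial_solution: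
  fixes c :: "'a \<Rightarrow> nat \<Rightarrow> complex"
  assumes "finite S" "card S > k"
  shows "\<exists>u. (\<exists>t\<in>S. u t \<noteq> 0) \<and> (\<forall>i<k. (\<Sum>t\<in>S. u t * c t i) = 0)"
  using assms
proof (induction k arbitrary: S c)
  case 0
  then obtain t where "t \<in> S" by (metis card_gt_0_iff ex_in_conv)
  then show ?case by (intro exI[of _ "\<lambda>_. 1"]) auto
next
  case (Suc k)
  show ?case
  proof (cases "\<forall>t\<in>S. c t k = 0")
    case True
    obtain u where "\<exists>t\<in>S. u t \<noteq> 0" "\<forall>i<k. (\<Sum>t\<in>S. u t * c t i) = 0"
      using Suc.IH[OF Suc.prems(1), of c] Suc.prems(2) by auto
    with True show ?thesis by (auto simp: less_Suc_eq)
  next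
    case False
    then obtain t0 where t0: "t0 \<in> S" "c t0 k \<noteq> 0" by auto
    (* eliminate the unknown t0 by means of equation k *)
    define d where "d t i = c t i - c t k / c t0 k * c t0 i" for t i
    have "finite (S - {t0})" "k < card (S - {t0})"
      using Suc.prems t0(1) by (auto simp: card_Diff_singleton)
    then obtain \<mu> where \<mu>: "\<exists>t\<in>S - {t0}. \<mu> t \<noteq> 0" "\<forall>i<k. (\<Sum>t\<in>S - {t0}. \<mu> t * d t i) = 0"
      using Suc.IH[of "S - {t0}" d] by blast
    define G where "G = (\<Sum>t\<in>S - {t0}. \<mu> t * c t k)"
    define u where "u = \<mu>(t0 := - G / c t0 k)"
    have "(\<Sum>t\<in>S. u t * c t i) = 0" if "i < Suc k" for i
    proof -
      have reduced: "(\<Sum>t\<in>S - {t0}. \<mu> t * d t i) = 0"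
        using \<mu>(2) that t0(2) by (cases "i < k") (auto simp: d_def less_Suc_eq)
      have "(\<Sum>t\<in>S - {t0}. \<mu> t * c t i)
          = (\<Sum>t\<in>S - {t0}. \<mu> t * d t i + \<mu> t * c t k * (c t0 i / c t0 k))"
        by (intro sum.cong refl) (simp add: d_def ring_distribs)
      also have "\<dots> = (\<Sum>t\<in>S - {t0}. \<mu> t * d t i) + G * (c t0 i / c t0 k)"
        unfolding G_def by (simp only: sum.distrib sum_distrib_right)
      also have "\<dots> = G * (c t0 i / c t0 k)" using reduced by simp
      finally have "(\<Sum>t\<in>S - {t0}. u t * c t i) = G * (c t0 i / c t0 k)"
        unfolding u_def by simp
      moreover have "(\<Sum>t\<in>S. u t * c t i) = u t0 * c t0 i + (\<Sum>t\<in>S - {t0}. u t * c t i)"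
        using Suc.prems(1) t0(1) by (rule sum.remove)
      ultimately show ?thesis using t0(2) by (simp add: u_def)
    qed
    moreover have "\<exists>t\<in>S. u t \<noteq> 0" using \<mu>(1) by (auto simp: u_def)
    ultimately show ?thesis by blast
  qed
qed

lemma homogeneous_system_unit_solution:
  fixes c :: "'a \<Rightarrow> nat \<Rightarrow> complex"
  assumes "finite S" "card S > k"
  shows "\<exists>u. (\<Sum>t\<in>S. (cmod (u t))^2) = 1 \<and> (\<forall>i<k. (\<Sum>t\<in>S. u t * c t i) = 0)"
proof -
  obtain u t0 where u: "t0 \<in> S" "u t0 \<noteq> 0" "\<forall>i<k. (\<Sum>t\<in>S. u t * c t i) = 0"
    using homogeneous_system_nontrivial_solution[OF assms] by blast
  define R where "R = (\<Sum>t\<in>S. (cmod (u t))^2)"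
  have "R > 0" unfolding R_def using u by (intro sum_pos2[OF assms(1) u(1)]) auto
  define u' where "u' t = u t / complex_of_real (sqrt R)" for t
  have "(\<Sum>t\<in>S. (cmod (u' t))^2) = (\<Sum>t\<in>S. (cmod (u t))^2 / R)"
    unfolding u'_def using \<open>R > 0\<close> by (simp add: norm_divide power_divide)
  also have "\<dots> = 1"
    unfolding sum_divide_distrib[symmetric] R_def[symmetric] using \<open>R > 0\<close> by simp
  moreover have "(\<Sum>t\<in>S. u' t * c t i) = (\<Sum>t\<in>S. u t * c t i) / complex_of_real (sqrt R)" for i
    unfolding u'_def by (simp add: sum_divide_distrib)
  ultimately show ?thesis using u(3) by (intro exI[of _ u']) auto
qed

lemma rank_le_kernel_unit_vector:
  assumes "F \<in> bop" "rank_le F k" "k < K"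
  obtains x where "x \<in> l2" "l2norm x = 1" "\<And>n. n \<ge> K \<Longrightarrow> x n = 0" "F x = (\<lambda>n. 0)"
proof -
  obtain v where "\<forall>x\<in>l2. \<exists>a. F x = (\<lambda>n. \<Sum>i<k. a i * v i n)"
    using assms(2) unfolding rank_le_def by blast
  then have "\<forall>t. \<exists>a. F (evec t) = (\<lambda>n. \<Sum>i<k. a i * v i n)" using evec_l2 by blast
  then obtain a where a: "\<And>t. F (evec t) = (\<lambda>n. \<Sum>i<k. a t i * v i n)" by metis
  obtain u where u: "(\<Sum>t<K. (cmod (u t))^2) = 1" "\<forall>i<k. (\<Sum>t<K. u t * a t i) = 0"
    using homogeneous_system_unit_solution[of "{..<K}" k a] assms(3) by auto
  define x where "x = (\<lambda>n. \<Sum>t<K. u t * evec t n)"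
  have x_eq: "x n = (if n < K then u n else 0)" for n
    unfolding x_def by (rule sum_mult_evec)
  have x: "x \<in> l2" by (rule l2_finite_support[of K]) (simp add: x_eq)
  have "(l2norm x)^2 = 1" using u(1) by (subst l2norm_squared_finite_support[of K]) (simp_all add: x_eq)
  then have "l2norm x = 1" using l2norm_nonneg[OF x] by (simp add: power2_eq_1_iff)
  have "F x = (\<lambda>n. \<Sum>t<K. u t * (\<Sum>i<k. a t i * v i n))"
    unfolding x_def using bop_sum[OF assms(1) evec_l2, where a=u and m=K] by (simp add: a)
  also have "\<dots> = (\<lambda>n. \<Sum>i<k. \<Sum>t<K. u t * a t i * v i n)"
    by (simp add: sum_distrib_left mult.assoc sum.swap[of _ "{..<K}" "{..<k}"])
  also have "\<dots> = (\<lambda>n. \<Sum>i<k. (\<Sum>t<K. u t * a t i) * v i n)"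
    by (simp add: sum_distrib_right)
  finally have "F x = (\<lambda>n. 0)" using u(2) by simp
  with x \<open>l2norm x = 1\<close> show ?thesis by (intro that) (simp_all add: x_eq)
qed

lemma sing_num_diag_mult_ge:
  assumes "\<And>n. cmod (w n) \<le> c" "k < K" "0 \<le> \<delta>" "\<And>n. n < K \<Longrightarrow> \<delta> \<le> cmod (w n)"
  shows "\<delta> \<le> sing_num k (diag_mult w)"
proof (rule sing_num_greatest)
  fix F assume F: "F \<in> bop" "rank_le F k"
  obtain x where x: "x \<in> l2" "l2norm x = 1" "\<And>n. n \<ge> K \<Longrightarrow> x n = 0" "F x = (\<lambda>n. 0)"
    using rank_le_kernel_unit_vector[OF F assms(2)] by blast
  obtain B where "bounded_by F B" using bop_bounded_by[OF F(1)] by auto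
  then have bd: "bounded_by (\<lambda>x n. diag_mult w x n - F x n) (2 * (c + B))"
    by (rule bounded_by_diff[OF bounded_by_diag_mult[of w c, OF assms(1)]])
  have "\<delta>^2 = (\<Sum>n<K. \<delta>^2 * (cmod (x n))^2)"
    using l2norm_squared_finite_support[of K x] x(2,3) by (simp add: sum_distrib_left[symmetric])
  also have "\<dots> \<le> (\<Sum>n<K. (cmod (diag_mult w x n))^2)"
  proof (rule sum_mono)
    fix n assume "n \<in> {..<K}"
    then have "\<delta> * cmod (x n) \<le> cmod (w n) * cmod (x n)"
      using assms(4) by (intro mult_right_mono) auto
    then have "(\<delta> * cmod (x n))^2 \<le> (cmod (w n) * cmod (x n))^2"
      using assms(3) by (intro power_mono) auto
    then show "\<delta>^2 * (cmod (x n))^2 \<le> (cmod (diag_mult w x n))^2"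
      by (simp add: diag_mult_def norm_mult power_mult_distrib)
  qed
  also have "\<dots> = (l2norm (diag_mult w x))^2"
    by (rule l2norm_squared_finite_support[symmetric]) (simp add: diag_mult_def x(3))
  finally have "\<delta> \<le> l2norm (diag_mult w x)"
    by (rule power2_le_imp_le) (rule l2norm_nonneg[OF l2_diag_mult[of w c, OF assms(1) x(1)]])
  also have "\<dots> = l2norm (\<lambda>n. diag_mult w x n - F x n)" by (simp add: x(4))
  also have "\<dots> \<le> opnorm (\<lambda>x n. diag_mult w x n - F x n)"
    using l2norm_le_opnorm[OF bd x(1)] x(2) by simp
  finally show "\<delta> \<le> opnorm (\<lambda>x n. diag_mult w x n - F x n)" .
qed

subsection \<open>Compression to a matrix block\<close>

text \<open>embed_block N x is the N\<times>N matrix with entries x (i*N + j) / N^2, and extract_block N X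
  lists the entries of the upper left N\<times>N corner of X divided by N; entrywise bounds make both
  maps contractions.\<close>
definition embed_block :: "nat \<Rightarrow> vec \<Rightarrow> op" where
  "embed_block N x = (\<lambda>y. if y \<in> l2
     then (\<lambda>i. if i < N then (\<Sum>j<N. x (i*N + j) * y j) / of_nat (N*N) else 0) else (\<lambda>n. 0))"

definition extract_block :: "nat \<Rightarrow> op \<Rightarrow> vec" where
  "extract_block N X = (\<lambda>n. if n < N*N then X (evec (n mod N)) (n div N) / of_nat N else 0)"

lemma
  assumes "N > 0" "x \<in> l2" "y \<in> l2"
  shows l2_embed_block: "embed_block N x y \<in> l2"
    and l2norm_embed_block_le: "l2norm (embed_block N x y) \<le> l2norm x * l2norm y"
proof -
  define z where "z = embed_block N x y"
  have z0: "\<And>i. i \<ge> N \<Longrightarrow> z i = 0" unfolding z_def embed_block_def using assms by auto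
  then show "embed_block N x y \<in> l2" unfolding z_def by (rule l2_finite_support)
  define B where "B = l2norm x * l2norm y"
  have B0: "0 \<le> B" unfolding B_def using l2norm_nonneg assms by simp
  have zi: "cmod (z i) \<le> B / N" for i
  proof (cases "i < N")
    case True
    have "cmod (\<Sum>j<N. x (i*N + j) * y j) \<le> (\<Sum>j<N. cmod (x (i*N + j) * y j))" by (rule norm_sum)
    also have "\<dots> \<le> of_nat (card {..<N}) * B"
      unfolding B_def norm_mult
      using norm_le_l2norm[OF assms(2)] norm_le_l2norm[OF assms(3)] l2norm_nonneg[OF assms(2)]
      by (intro sum_bounded_above mult_mono) auto
    finally have "cmod (\<Sum>j<N. x (i*N + j) * y j) \<le> N * B" by simp
    moreover have "cmod (z i) = cmod (\<Sum>j<N. x (i*N + j) * y j) / (N * N)"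
      unfolding z_def embed_block_def using True assms by (simp add: norm_divide norm_mult)
    ultimately have "cmod (z i) \<le> (N * B) / (N * N)"
      by (metis divide_right_mono of_nat_0_le_iff)
    also have "\<dots> = B / N" using assms by simp
    finally show ?thesis .
  qed (use z0 B0 in simp)
  have "(l2norm z)^2 = (\<Sum>i<N. (cmod (z i))^2)" by (rule l2norm_squared_finite_support) (use z0 in auto)
  also have "\<dots> \<le> of_nat (card {..<N}) * (B / N)^2"
    using zi norm_ge_zero by (intro sum_bounded_above power_mono) auto
  also have "\<dots> = B^2 / N" using assms by (simp add: power2_eq_square)
  also have "\<dots> \<le> B^2" using assms by (simp add: divide_le_eq mult_le_cancel_left1)
  finally show "l2norm (embed_block N x y) \<le> l2norm x * l2norm y"
    unfolding z_def B_def[symmetric] by (rule power2_le_imp_le) (use B0 in simp)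
qed

lemma contr_in_embed_block:
  assumes "N > 0" shows "contr_in (embed_block N)"
  unfolding contr_in_def
proof (intro conjI ballI allI impI)
  fix x assume x: "x \<in> l2"
  show "embed_block N x \<in> bop"
    unfolding bop_def
  proof (intro CollectI conjI ballI allI impI)
    fix a y1 y2 assume "y1 \<in> l2" "y2 \<in> l2"
    then show "embed_block N x (\<lambda>n. a * y1 n + y2 n) = (\<lambda>n. a * embed_block N x y1 n + embed_block N x y2 n)"
      using l2_lincomb unfolding embed_block_def
      by (auto simp: distrib_left sum.distrib sum_distrib_left mult.left_commute add_divide_distrib)
  next
    show "\<exists>C. \<forall>y\<in>l2. l2norm (embed_block N x y) \<le> C * l2norm y"
      using l2norm_embed_block_le[OF assms x] by blast
  qed (use l2_embed_block[OF assms x] in \<open>auto simp: embed_block_def\<close>)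
  show "opnorm (embed_block N x) \<le> l2norm x"
  proof (rule opnorm_le)
    fix y assume y: "y \<in> l2" "l2norm y \<le> 1"
    have "l2norm (embed_block N x y) \<le> l2norm x * l2norm y"
      by (rule l2norm_embed_block_le[OF assms x y(1)])
    also have "\<dots> \<le> l2norm x" using y l2norm_nonneg[OF x] by (simp add: mult_left_le)
    finally show "l2norm (embed_block N x y) \<le> l2norm x" .
  qed
next
  fix a x1 x2
  show "embed_block N (\<lambda>n. a * x1 n + x2 n) = (\<lambda>v n. a * embed_block N x1 v n + embed_block N x2 v n)"
    unfolding embed_block_def
    by (auto simp: fun_eq_iff distrib_right sum.distrib sum_distrib_left mult.assoc add_divide_distrib)
qed

lemma contr_out_extract_block:
  assumes "N > 0" shows "contr_out (extract_block N)"
  unfolding contr_out_def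
proof (intro conjI ballI allI impI)
  fix X assume X: "X \<in> bop"
  show "extract_block N X \<in> l2" by (rule l2_finite_support[of "N*N"]) (auto simp: extract_block_def)
  obtain B where bX: "bounded_by X B" using bop_bounded_by[OF X] by auto
  have o0: "0 \<le> opnorm X" by (rule opnorm_nonneg[OF bX])
  have "cmod (X (evec j) i) \<le> opnorm X" for i j
    using norm_le_l2norm[OF bop_l2[OF X evec_l2]] l2norm_le_opnorm[OF bX evec_l2] l2norm_evec
    by (metis order.refl order_trans)
  then have entry: "cmod (extract_block N X n) \<le> opnorm X / N" for n
    unfolding extract_block_def using o0 by (auto simp: norm_divide intro: divide_right_mono)
  have "(l2norm (extract_block N X))^2 = (\<Sum>n<N*N. (cmod (extract_block N X n))^2)"
    by (rule l2norm_squared_finite_support) (auto simp: extract_block_def)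
  also have "\<dots> \<le> of_nat (card {..<N*N}) * (opnorm X / N)^2"
    using entry norm_ge_zero by (intro sum_bounded_above power_mono) auto
  also have "\<dots> = (opnorm X)^2" using assms by (simp add: power2_eq_square)
  finally show "l2norm (extract_block N X) \<le> opnorm X" by (rule power2_le_imp_le) (use o0 in simp)
next
  fix a X Y
  show "extract_block N (\<lambda>v n. a * X v n + Y v n) = (\<lambda>n. a * extract_block N X n + extract_block N Y n)"
    unfolding extract_block_def by (auto simp: fun_eq_iff add_divide_distrib)
qed

definition block_weight :: "vec \<Rightarrow> nat \<Rightarrow> vec" where
  "block_weight d N n = (if n < N*N then d (n div N) * d (n mod N) / of_nat (N*N*N) else 0)"

lemma extract_block_mult_diag_op_embed_block:
  assumes "N > 0"
  shows "extract_block N (mult_op (diag_op d) (diag_op d) (embed_block N x))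
    = diag_mult (block_weight d N) x"
proof (rule ext)
  fix n
  show "extract_block N (mult_op (diag_op d) (diag_op d) (embed_block N x)) n
    = diag_mult (block_weight d N) x n"
  proof (cases "n < N*N")
    case True
    define i j where "i = n div N" and "j = n mod N"
    have ij: "i < N" "j < N" "i * N + j = n"
      using True assms unfolding i_def j_def by (auto simp: less_mult_imp_div_less)
    have De: "diag_op d (evec j) = (\<lambda>m. if m = j then d j else 0)"
      using evec_l2 by (auto simp: diag_op_def diag_mult_def evec_def)
    have "diag_op d (evec j) \<in> l2" unfolding De by (rule l2_finite_support[of "Suc j"]) simp
    then have Q: "embed_block N x (diag_op d (evec j))
        = (\<lambda>i'. if i' < N then x (i'*N + j) * d j / of_nat (N*N) else 0)"
      using ij(2) by (simp add: embed_block_def De if_distrib[of "(*) _"] cong: if_cong)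
    have "embed_block N x (diag_op d (evec j)) \<in> l2"
      unfolding Q by (rule l2_finite_support[of N]) simp
    then have "extract_block N (mult_op (diag_op d) (diag_op d) (embed_block N x)) n
        = d i * embed_block N x (diag_op d (evec j)) i / of_nat N"
      using True by (simp add: extract_block_def mult_op_def diag_op_def diag_mult_def i_def j_def)
    also have "\<dots> = d i * (x n * d j / of_nat (N*N)) / of_nat N" using ij by (simp add: Q)
    finally show ?thesis
      using True by (simp add: diag_mult_def block_weight_def i_def j_def field_simps)
  qed (simp add: extract_block_def diag_mult_def block_weight_def)
qed

subsection \<open>Hilbert numbers of X \<mapsto> D X D\<close>

definition contractive :: "(op \<Rightarrow> op) \<Rightarrow> bool" where
  "contractive \<Phi> = (\<forall>X\<in>bop. \<Phi> X \<in> bop \<and> opnorm (\<Phi> X) \<le> opnorm X)"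

lemma contractive_mult_op:
  assumes "A \<in> bop" "B \<in> bop"
    and "\<And>x. x \<in> l2 \<Longrightarrow> l2norm (A x) \<le> l2norm x" "\<And>x. x \<in> l2 \<Longrightarrow> l2norm (B x) \<le> l2norm x"
  shows "contractive (mult_op A B)"
  unfolding contractive_def
proof (intro ballI conjI)
  fix X assume X: "X \<in> bop"
  show "mult_op A B X \<in> bop" unfolding mult_op_def by (intro bop_comp assms X)
  obtain C where bX: "bounded_by X C" using bop_bounded_by[OF X] by blast
  show "opnorm (mult_op A B X) \<le> opnorm X"
  proof (rule opnorm_le)
    fix y assume y: "y \<in> l2" "l2norm y \<le> 1"
    have By: "B y \<in> l2" "l2norm (B y) \<le> 1"
      using bop_l2[OF assms(2) y(1)] assms(4)[OF y(1)] y(2) by auto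
    have "l2norm (A (X (B y))) \<le> l2norm (X (B y))" by (rule assms(3)[OF bop_l2[OF X By(1)]])
    also have "\<dots> \<le> opnorm X" by (rule l2norm_le_opnorm[OF bX By])
    finally show "l2norm (mult_op A B X y) \<le> opnorm X" by (simp add: mult_op_def)
  qed
qed

lemma bounded_by_compression:
  assumes "contr_out P" "contr_in Q" "contractive \<Phi>"
  shows "bounded_by (\<lambda>x. P (\<Phi> (Q x))) 1"
  unfolding bounded_by_def
proof (intro ballI impI conjI)
  fix x assume x: "x \<in> l2" "l2norm x \<le> 1"
  then have Qx: "Q x \<in> bop" "opnorm (Q x) \<le> 1"
    using assms(2) order_trans unfolding contr_in_def by blast+
  then have "\<Phi> (Q x) \<in> bop" "opnorm (\<Phi> (Q x)) \<le> 1"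
    using assms(3) order_trans unfolding contractive_def by blast+
  then show "P (\<Phi> (Q x)) \<in> l2" "l2norm (P (\<Phi> (Q x))) \<le> 1"
    using assms(1) order_trans unfolding contr_out_def by blast+
qed

lemma sing_num_le_hilbert_num:
  assumes "contr_out P" "contr_in Q" "contractive \<Phi>"
  shows "sing_num k (\<lambda>x. P (\<Phi> (Q x))) \<le> hilbert_num k \<Phi>"
proof -
  define H where "H = {sing_num k (\<lambda>x. P (\<Phi> (Q x))) | P Q. contr_out P \<and> contr_in Q}"
  have "h \<le> 1" if h: "h \<in> H" for h
  proof -
    obtain P' Q' where PQ: "contr_out P'" "contr_in Q'" "h = sing_num k (\<lambda>x. P' (\<Phi> (Q' x)))"
      using h unfolding H_def by blast
    then have b: "bounded_by (\<lambda>x. P' (\<Phi> (Q' x))) 1" using bounded_by_compression assms(3) by blast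
    have "h \<le> opnorm (\<lambda>x. P' (\<Phi> (Q' x)))" using sing_num_le_opnorm[OF b] PQ(3) by simp
    also have "\<dots> \<le> 1" using b by (intro opnorm_le) (auto simp: bounded_by_def)
    finally show ?thesis .
  qed
  then have "bdd_above H" by (rule bdd_aboveI)
  moreover have "sing_num k (\<lambda>x. P (\<Phi> (Q x))) \<in> H" unfolding H_def using assms(1,2) by blast
  ultimately show ?thesis unfolding hilbert_num_def H_def[symmetric] by (rule cSup_upper[rotated])
qed

lemma norm_block_weight:
  "n < N*N \<Longrightarrow> cmod (block_weight d N n) = cmod (d (n div N)) * cmod (d (n mod N)) / real N ^ 3"
  by (simp add: block_weight_def norm_divide norm_mult power3_eq_cube)

lemma hilbert_num_mult_diag_op_ge:
  assumes "\<And>n. cmod (d n) \<le> 1" "0 \<le> \<delta>" "\<And>i. i \<le> s \<Longrightarrow> \<delta> \<le> cmod (d i)" "k < Suc s * Suc s"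
  shows "\<delta>^2 / (real s + 1)^3 \<le> hilbert_num k (mult_op (diag_op d) (diag_op d))"
proof -
  define N where "N = Suc s"
  have N: "N > 0" "real N = real s + 1" unfolding N_def by simp_all
  have w_le: "cmod (block_weight d N n) \<le> 1" for n
  proof (cases "n < N*N")
    case True
    have "cmod (d (n div N)) * cmod (d (n mod N)) \<le> 1 * 1" using assms(1) by (intro mult_mono) auto
    moreover have "1 \<le> real N ^ 3" using N(2) by simp
    ultimately show ?thesis using True by (simp add: norm_block_weight divide_le_eq)
  qed (simp add: block_weight_def)
  have w_ge: "\<delta>^2 / (real s + 1)^3 \<le> cmod (block_weight d N n)" if "n < N*N" for n
  proof -
    have "n div N < N" "n mod N < N" using that N(1) by (auto simp: less_mult_imp_div_less)
    then have "\<delta> * \<delta> \<le> cmod (d (n div N)) * cmod (d (n mod N))"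
      using assms(2,3) unfolding N_def by (intro mult_mono) auto
    then show ?thesis using that N by (simp add: norm_block_weight power2_eq_square divide_right_mono)
  qed
  have contraction: "l2norm (diag_op d x) \<le> l2norm x" if "x \<in> l2" for x
    using l2norm_diag_mult_le[of d 1, OF assms(1) that] that by (simp add: diag_op_def)
  have "\<delta>^2 / (real s + 1)^3 \<le> sing_num k (diag_mult (block_weight d N))"
    using w_le w_ge assms(2,4) unfolding N_def
    by (intro sing_num_diag_mult_ge[where c=1 and K="N*N"]) (auto simp: N_def)
  also have "\<dots> = sing_num k (\<lambda>x. extract_block N (mult_op (diag_op d) (diag_op d) (embed_block N x)))"
    using extract_block_mult_diag_op_embed_block[OF N(1)] by simp
  also have "\<dots> \<le> hilbert_num k (mult_op (diag_op d) (diag_op d))"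
    using diag_op_bop[of d 1, OF assms(1)] contraction
    by (intro sing_num_le_hilbert_num contr_out_extract_block contr_in_embed_block N(1) contractive_mult_op)
  finally show ?thesis .
qed

lemma norm_geom_seq_le_one: "0 \<le> \<omega> \<Longrightarrow> \<omega> \<le> 1 \<Longrightarrow> cmod (geom_seq \<omega> n) \<le> 1"
  by (simp add: geom_seq_def norm_power power_le_one)

lemma sing_num_diag_op_geom_seq_in_principal_calkin:
  assumes "0 \<le> \<omega>" "\<omega> < 1"
  shows "(\<lambda>k. complex_of_real (sing_num k (diag_op (geom_seq \<omega>)))) \<in> principal_calkin (geom_seq \<omega>)"
proof -
  have bound: "cmod (geom_seq \<omega> n) \<le> 1" for n using assms by (simp add: norm_geom_seq_le_one)
  have s: "0 \<le> sing_num k (diag_op (geom_seq \<omega>))" "sing_num k (diag_op (geom_seq \<omega>)) \<le> \<omega> ^ k" for k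
    using sing_num_nonneg[OF bounded_by_diag_op[of _ 1, OF bound]]
      sing_num_diag_op_le[of "geom_seq \<omega>", OF bound] assms
    by (auto simp: geom_seq_def norm_power power_decreasing)
  then have le: "cmod (complex_of_real (sing_num k (diag_op (geom_seq \<omega>)))) \<le> cmod (geom_seq \<omega> k)" for k
    using assms by (simp add: geom_seq_def norm_power)
  have "(\<lambda>k. complex_of_real (sing_num k (diag_op (geom_seq \<omega>)))) \<longlonglongrightarrow> 0"
    using s assms by (intro Lim_null_comparison[OF _ LIMSEQ_power_zero[of \<omega>]] always_eventually) auto
  then show ?thesis
    using assms le by (intro principal_calkin_dominated geom_seq_c0) (auto simp: c0_def)
qed

lemma one_le_of_square_div_le_cube:
  fixes x q C :: real
  assumes "x^2 / q \<le> C * x^3" "0 < x" "0 < q"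
  shows "1 \<le> C * q * x"
proof -
  from assms(1,3) have "x^2 \<le> C * x^3 * q" by (simp add: pos_divide_le_eq)
  then have "x^2 * 1 \<le> x^2 * (C * q * x)" by (simp add: power2_eq_square power3_eq_cube mult_ac)
  then show ?thesis using assms(2) by (simp add: mult_le_cancel_left_pos)
qed

lemma ex_ge_cube_mult_power_lt_one:
  fixes \<omega> :: real
  assumes "0 < \<omega>" "\<omega> < 1"
  shows "\<exists>s\<ge>M. C * (real s + 1)^3 * \<omega> ^ s < 1"
proof -
  have "(\<lambda>s. C * (real s + 1)^3 * \<omega> ^ s) \<longlonglongrightarrow> 0" using assms by real_asymp
  then have "\<forall>\<^sub>F s in sequentially. C * (real s + 1)^3 * \<omega> ^ s < 1" by (rule order_tendstoD) simp
  then obtain N where "\<And>s. s \<ge> N \<Longrightarrow> C * (real s + 1)^3 * \<omega> ^ s < 1"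
    unfolding eventually_sequentially by blast
  then show ?thesis by (intro exI[of _ "max N M"]) simp
qed

lemma hilbert_num_mult_diag_op_geom_seq_notin_principal_calkin:
  assumes "0 < \<omega>" "\<omega> < 1"
  shows "(\<lambda>k. complex_of_real (hilbert_num k (mult_op (diag_op (geom_seq \<omega>)) (diag_op (geom_seq \<omega>)))))
    \<notin> principal_calkin (geom_seq \<omega>)" (is "?h \<notin> _")
proof
  assume "?h \<in> principal_calkin (geom_seq \<omega>)"
  moreover have "principal_calkin (geom_seq \<omega>) \<subseteq> geom_decay_class \<omega>"
    using assms by (intro principal_calkin_subset calkin_space_geom_decay_class
      geom_seq_in_geom_decay_class) auto
  ultimately have "?h \<in> geom_decay_class \<omega>" by blast
  then obtain C m where h: "?h \<in> c0" "\<And>n. rearr ?h (m * n) \<le> C * \<omega> ^ n"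
    unfolding geom_decay_class_def by blast
  have large: "1 \<le> C * (real s + 1)^3 * \<omega> ^ s" if "s \<ge> 3 * m" for s
  proof -
    have "m * (3 * s) \<le> s * s" using mult_le_mono1[OF that, of s] by (simp add: ac_simps)
    also have "s * s < Suc s * Suc s" by simp
    finally have j: "m * (3 * s) < Suc s * Suc s" .
    have "(\<omega> ^ s)^2 / (real s + 1)^3 \<le> cmod (?h k)" if "k < Suc s * Suc s" for k
      using hilbert_num_mult_diag_op_ge[where d="geom_seq \<omega>" and \<delta>="\<omega> ^ s", OF _ _ _ that]
        norm_geom_seq_le_one assms
      by (auto simp: geom_seq_def norm_power power_decreasing)
    then have "(\<omega> ^ s)^2 / (real s + 1)^3 \<le> rearr ?h (m * (3 * s))"
      by (rule le_rearr_of_le_initial[OF c0_Bseq[OF h(1)] j])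
    also have "\<dots> \<le> C * \<omega> ^ (3 * s)" by (rule h(2))
    also have "\<dots> = C * (\<omega> ^ s)^3" by (simp add: power_mult[symmetric] mult.commute)
    finally have "(\<omega> ^ s)^2 / (real s + 1)^3 \<le> C * (\<omega> ^ s)^3" .
    moreover have "0 < \<omega> ^ s" "0 < (real s + 1)^3" using assms by simp_all
    ultimately show ?thesis by (rule one_le_of_square_div_le_cube)
  qed
  obtain s where "s \<ge> 3 * m" "C * (real s + 1)^3 * \<omega> ^ s < 1"
    using ex_ge_cube_mult_power_lt_one[OF assms] by blast
  then show False using large by fastforce
qed

theorem proposition4p8:
  fixes \<omega> :: real
  assumes "0 < \<omega>" and "\<omega> < 1"
  shows "\<exists>A\<in>bop.
     (\<lambda>k. complex_of_real (sing_num k A)) \<in> principal_calkin (\<lambda>k. complex_of_real (\<omega> ^ k))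
   \<and> (\<lambda>k. complex_of_real (hilbert_num k (mult_op A A)))
        \<notin> principal_calkin (\<lambda>k. complex_of_real (\<omega> ^ k))"
proof
  have "cmod (geom_seq \<omega> n) \<le> 1" for n using assms by (simp add: norm_geom_seq_le_one)
  then show "diag_op (geom_seq \<omega>) \<in> bop" by (rule diag_op_bop)
  show "(\<lambda>k. complex_of_real (sing_num k (diag_op (geom_seq \<omega>))))
      \<in> principal_calkin (\<lambda>k. complex_of_real (\<omega> ^ k))
    \<and> (\<lambda>k. complex_of_real (hilbert_num k (mult_op (diag_op (geom_seq \<omega>)) (diag_op (geom_seq \<omega>)))))
      \<notin> principal_calkin (\<lambda>k. complex_of_real (\<omega> ^ k))"
    using sing_num_diag_op_geom_seq_in_principal_calkin[of \<omega>]
      hilbert_num_mult_diag_op_geom_seq_notin_principal_calkin[of \<omega>] assms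
    unfolding geom_seq_def by auto
qed

end
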